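(* The variety $\mathsf{V}(S_{(4,467)})$ is the ai-semiring variety defined by the identities $xy\approx yx$, $x^2y\approx xy$, $x^2\approx x^2+x$, $x+xyz\approx x+xyz+xy$, $x_1x_2+x_3x_4\approx x_1x_2+x_3x_4+x_1x_2x_3x_4$.
   Context: An ai-semiring is an algebra $(S,+,\cdot)$ with $(S,+)$ a semilattice, $(S,\cdot)$ a semigroup, and both distributive laws. $\mathsf{V}(S)$ is the variety generated by $S$; "the ai-semiring variety defined by identities $\Sigma$" is the class of all ai-semirings satisfying $\Sigma$. $S_{(4,467)}$ has carrier $\{1,2,3,4\}$; addition: $x+x=x$, $2+x=x$, $1+x=1$ for all $x$, $3+4=1$; multiplication (row $a$, column $b$ gives $a\cdot b$): row $1$: $1,3,3,1$; row $2$: $3,2,3,3$; row $3$: $3,3,3,3$; row $4$: $1,3,3,1$. *)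

theory Defs
  imports Main
begin

datatype 'v trm = Var 'v | Add "'v trm" "'v trm" | Mul "'v trm" "'v trm"

fun eval :: "('a \<Rightarrow> 'a \<Rightarrow> 'a) \<Rightarrow> ('a \<Rightarrow> 'a \<Rightarrow> 'a) \<Rightarrow> ('v \<Rightarrow> 'a) \<Rightarrow> 'v trm \<Rightarrow> 'a" where
  "eval ad mu \<sigma> (Var v) = \<sigma> v"
| "eval ad mu \<sigma> (Add p q) = ad (eval ad mu \<sigma> p) (eval ad mu \<sigma> q)"
| "eval ad mu \<sigma> (Mul p q) = mu (eval ad mu \<sigma> p) (eval ad mu \<sigma> q)"

definition closed_alg :: "'a set \<Rightarrow> ('a \<Rightarrow> 'a \<Rightarrow> 'a) \<Rightarrow> ('a \<Rightarrow> 'a \<Rightarrow> 'a) \<Rightarrow> bool" where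
  "closed_alg A ad mu \<longleftrightarrow> (\<forall>x\<in>A. \<forall>y\<in>A. ad x y \<in> A \<and> mu x y \<in> A)"

definition satisfies :: "'a set \<Rightarrow> ('a \<Rightarrow> 'a \<Rightarrow> 'a) \<Rightarrow> ('a \<Rightarrow> 'a \<Rightarrow> 'a) \<Rightarrow> 'v trm \<Rightarrow> 'v trm \<Rightarrow> bool" where
  "satisfies A ad mu p q \<longleftrightarrow> (\<forall>\<sigma>. (\<forall>v. \<sigma> v \<in> A) \<longrightarrow> eval ad mu \<sigma> p = eval ad mu \<sigma> q)"

definition ai_semiring :: "'a set \<Rightarrow> ('a \<Rightarrow> 'a \<Rightarrow> 'a) \<Rightarrow> ('a \<Rightarrow> 'a \<Rightarrow> 'a) \<Rightarrow> bool" where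
  "ai_semiring A ad mu \<longleftrightarrow> closed_alg A ad mu \<and>
     (\<forall>x\<in>A. \<forall>y\<in>A. \<forall>z\<in>A.
        ad (ad x y) z = ad x (ad y z) \<and> ad x y = ad y x \<and> ad x x = x \<and>
        mu (mu x y) z = mu x (mu y z) \<and>
        mu x (ad y z) = ad (mu x y) (mu x z) \<and>
        mu (ad x y) z = ad (mu x z) (mu y z))"

datatype s4 = E1 | E2 | E3 | E4

fun add4 :: "s4 \<Rightarrow> s4 \<Rightarrow> s4" where
  "add4 E1 _ = E1"
| "add4 _ E1 = E1"
| "add4 E2 y = y"
| "add4 x E2 = x"
| "add4 E3 E3 = E3"
| "add4 E4 E4 = E4"
| "add4 E3 E4 = E1"
| "add4 E4 E3 = E1"

fun mul4 :: "s4 \<Rightarrow> s4 \<Rightarrow> s4" where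
  "mul4 E1 E1 = E1" | "mul4 E1 E2 = E3" | "mul4 E1 E3 = E3" | "mul4 E1 E4 = E1"
| "mul4 E2 E1 = E3" | "mul4 E2 E2 = E2" | "mul4 E2 E3 = E3" | "mul4 E2 E4 = E3"
| "mul4 E3 _ = E3"
| "mul4 E4 E1 = E1" | "mul4 E4 E2 = E3" | "mul4 E4 E3 = E3" | "mul4 E4 E4 = E1"

text \<open>Membership in the variety V(S) generated by S: by Birkhoff's HSP theorem,
  V(S) is exactly the class of algebras satisfying every identity of S.\<close>

definition in_V_S4 :: "'a set \<Rightarrow> ('a \<Rightarrow> 'a \<Rightarrow> 'a) \<Rightarrow> ('a \<Rightarrow> 'a \<Rightarrow> 'a) \<Rightarrow> bool" where
  "in_V_S4 A ad mu \<longleftrightarrow> closed_alg A ad mu \<and>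
     (\<forall>p q :: nat trm. satisfies (UNIV :: s4 set) add4 mul4 p q \<longrightarrow> satisfies A ad mu p q)"

end

theory Submission
  imports Defs
begin

text \<open>In an ai-semiring every term evaluates to the join of its monomials (nonempty words), so an
  identity holds iff every monomial of each side lies below the other side in the order
  x <= y iff x + y = y. Evaluating in S_(4,467) under valuations into {2, 4} shows that a word w
  lies below p there only if w is covered by the monomials of p: some monomial uses only variables
  of w, and if |w| >= 2 every variable of w occurs in a monomial of length at least 2. Conversely,
  under the five identities, commutativity and x^2 y = xy make a word of length at least 2 absorb
  every word over its variables; xy + zw >= xyzw puts the product F of all long monomials of p
  below p; and x + xyz >= xy, applied to a monomial u over the variables of w, to w and to F,
  gives w = uw <= p because uwF = F. Single variables are handled by x <= x^2.\<close>

fun foldr1 :: "('a \<Rightarrow> 'a \<Rightarrow> 'a) \<Rightarrow> 'a list \<Rightarrow> 'a" where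
  "foldr1 f [x] = x"
| "foldr1 f (x # y # zs) = f x (foldr1 f (y # zs))"
| "foldr1 f [] = undefined"

lemma foldr1_Cons: "xs \<noteq> [] \<Longrightarrow> foldr1 f (x # xs) = f x (foldr1 f xs)"
  by (cases xs) auto

lemma foldr1_in:
  assumes "\<And>x y. x \<in> A \<Longrightarrow> y \<in> A \<Longrightarrow> f x y \<in> A" and "xs \<noteq> []" and "set xs \<subseteq> A"
  shows "foldr1 f xs \<in> A"
  using assms(2,3) by (induction xs rule: induct_list012) (use assms(1) in auto)

lemma foldr1_append:
  assumes closed: "\<And>x y. x \<in> A \<Longrightarrow> y \<in> A \<Longrightarrow> f x y \<in> A"
    and assoc: "\<And>x y z. x \<in> A \<Longrightarrow> y \<in> A \<Longrightarrow> z \<in> A \<Longrightarrow> f (f x y) z = f x (f y z)"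
    and "xs \<noteq> []" "ys \<noteq> []" "set xs \<subseteq> A" "set ys \<subseteq> A"
  shows "foldr1 f (xs @ ys) = f (foldr1 f xs) (foldr1 f ys)"
  using assms(3-6)
proof (induction xs rule: induct_list012)
  case (3 x y zs)
  then show ?case
    using foldr1_in[OF closed] by (simp add: assoc)
qed (auto simp: foldr1_Cons)

definition ai_le :: "('a \<Rightarrow> 'a \<Rightarrow> 'a) \<Rightarrow> 'a \<Rightarrow> 'a \<Rightarrow> bool" where
  "ai_le ad x y \<longleftrightarrow> ad x y = y"

fun monomials :: "'v trm \<Rightarrow> 'v list list" where
  "monomials (Var v) = [[v]]"
| "monomials (Add p q) = monomials p @ monomials q"
| "monomials (Mul p q) = [u @ v. u \<leftarrow> monomials p, v \<leftarrow> monomials q]"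

lemma monomials_ne: "monomials t \<noteq> []"
  by (induction t) auto

lemma monomial_ne: "w \<in> set (monomials t) \<Longrightarrow> w \<noteq> []"
  by (induction t arbitrary: w) auto

definition assign :: "'a list \<Rightarrow> nat \<Rightarrow> 'a" where
  "assign xs v = xs ! min v (length xs - 1)"

lemma satisfies_instance:
  assumes "satisfies A ad mu p q" and "xs \<noteq> []" and "set xs \<subseteq> A"
  shows "eval ad mu (assign xs) p = eval ad mu (assign xs) q"
proof -
  have "assign xs v \<in> set xs" for v
    using assms(2) unfolding assign_def by (intro nth_mem) (simp add: min_less_iff_disj)
  then have "assign xs v \<in> A" for v
    using assms(3) by blast
  then show ?thesis
    using assms(1) by (simp add: satisfies_def)
qed

definition ai_semiring_identities :: "(nat trm \<times> nat trm) set" where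
  "ai_semiring_identities = (let x = Var 0; y = Var 1; z = Var 2 in
     {(Add (Add x y) z, Add x (Add y z)), (Add x y, Add y x), (Add x x, x),
      (Mul (Mul x y) z, Mul x (Mul y z)),
      (Mul x (Add y z), Add (Mul x y) (Mul x z)), (Mul (Add x y) z, Add (Mul x z) (Mul y z))})"

lemma ai_semiring_iff_satisfies:
  "ai_semiring A ad mu \<longleftrightarrow>
   closed_alg A ad mu \<and> (\<forall>(p, q) \<in> ai_semiring_identities. satisfies A ad mu p q)"
proof
  assume "ai_semiring A ad mu"
  then show "closed_alg A ad mu \<and> (\<forall>(p, q) \<in> ai_semiring_identities. satisfies A ad mu p q)"
    by (auto simp: ai_semiring_def ai_semiring_identities_def satisfies_def Let_def)
next
  assume sat: "closed_alg A ad mu \<and> (\<forall>(p, q) \<in> ai_semiring_identities. satisfies A ad mu p q)"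
  show "ai_semiring A ad mu"
    unfolding ai_semiring_def
  proof (intro conjI ballI)
    fix x y z
    assume "x \<in> A" "y \<in> A" "z \<in> A"
    then have "\<forall>(p, q) \<in> ai_semiring_identities.
        eval ad mu (assign [x, y, z]) p = eval ad mu (assign [x, y, z]) q"
      using sat satisfies_instance[of A ad mu _ _ "[x, y, z]"] by auto
    moreover have "assign [x, y, z] 0 = x" "assign [x, y, z] 1 = y" "assign [x, y, z] 2 = z"
      by (simp_all add: assign_def)
    ultimately show "ad (ad x y) z = ad x (ad y z)" "ad x y = ad y x" "ad x x = x"
      "mu (mu x y) z = mu x (mu y z)" "mu x (ad y z) = ad (mu x y) (mu x z)"
      "mu (ad x y) z = ad (mu x z) (mu y z)"
      unfolding ai_semiring_identities_def Let_def by auto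
  qed (use sat in blast)
qed

locale ai_semiring_on =
  fixes A :: "'a set" and ad mu :: "'a \<Rightarrow> 'a \<Rightarrow> 'a"
  assumes ai_semiring: "ai_semiring A ad mu"
begin

abbreviation le :: "'a \<Rightarrow> 'a \<Rightarrow> bool" (infix "\<preceq>" 50) where
  "x \<preceq> y \<equiv> ai_le ad x y"

lemma add_closed: "x \<in> A \<Longrightarrow> y \<in> A \<Longrightarrow> ad x y \<in> A"
  and mult_closed: "x \<in> A \<Longrightarrow> y \<in> A \<Longrightarrow> mu x y \<in> A"
  using ai_semiring unfolding ai_semiring_def closed_alg_def by blast+

declare add_closed [simp] mult_closed [simp]

lemma add_assoc: "x \<in> A \<Longrightarrow> y \<in> A \<Longrightarrow> z \<in> A \<Longrightarrow> ad (ad x y) z = ad x (ad y z)"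
  and add_commute: "x \<in> A \<Longrightarrow> y \<in> A \<Longrightarrow> ad x y = ad y x"
  and add_idem: "x \<in> A \<Longrightarrow> ad x x = x"
  and mult_assoc: "x \<in> A \<Longrightarrow> y \<in> A \<Longrightarrow> z \<in> A \<Longrightarrow> mu (mu x y) z = mu x (mu y z)"
  and distrib_left: "x \<in> A \<Longrightarrow> y \<in> A \<Longrightarrow> z \<in> A \<Longrightarrow> mu x (ad y z) = ad (mu x y) (mu x z)"
  and distrib_right: "x \<in> A \<Longrightarrow> y \<in> A \<Longrightarrow> z \<in> A \<Longrightarrow> mu (ad x y) z = ad (mu x z) (mu y z)"
  using ai_semiring unfolding ai_semiring_def by blast+

lemma le_refl: "x \<in> A \<Longrightarrow> x \<preceq> x"
  by (simp add: ai_le_def add_idem)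

lemma le_antisym: "x \<in> A \<Longrightarrow> y \<in> A \<Longrightarrow> x \<preceq> y \<Longrightarrow> y \<preceq> x \<Longrightarrow> x = y"
  unfolding ai_le_def by (metis add_commute)

lemma le_trans: "x \<in> A \<Longrightarrow> y \<in> A \<Longrightarrow> z \<in> A \<Longrightarrow> x \<preceq> y \<Longrightarrow> y \<preceq> z \<Longrightarrow> x \<preceq> z"
  unfolding ai_le_def by (metis add_assoc)

lemma add_le_iff:
  assumes "x \<in> A" "y \<in> A" "z \<in> A"
  shows "ad x y \<preceq> z \<longleftrightarrow> x \<preceq> z \<and> y \<preceq> z"
proof
  have absorb: "ad a z = z" if "a \<in> A" "b \<in> A" "ad (ad a b) z = z" for a b
  proof -
    have "ad a z = ad a (ad (ad a b) z)"
      using that(3) by simp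
    also have "\<dots> = ad (ad (ad a a) b) z"
      using that assms(3) by (simp add: add_assoc)
    finally show ?thesis
      using that by (simp add: add_idem)
  qed
  assume "ad x y \<preceq> z"
  then show "x \<preceq> z \<and> y \<preceq> z"
    using absorb[of x y] absorb[of y x] assms by (simp add: ai_le_def add_commute[of x y])
next
  assume "x \<preceq> z \<and> y \<preceq> z"
  then show "ad x y \<preceq> z"
    using assms by (simp add: ai_le_def add_assoc)
qed

lemma foldr1_add_in: "xs \<noteq> [] \<Longrightarrow> set xs \<subseteq> A \<Longrightarrow> foldr1 ad xs \<in> A"
  and foldr1_mult_in: "xs \<noteq> [] \<Longrightarrow> set xs \<subseteq> A \<Longrightarrow> foldr1 mu xs \<in> A"
  by (simp_all add: foldr1_in)

lemma foldr1_add_append: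
  "xs \<noteq> [] \<Longrightarrow> ys \<noteq> [] \<Longrightarrow> set xs \<subseteq> A \<Longrightarrow> set ys \<subseteq> A \<Longrightarrow>
   foldr1 ad (xs @ ys) = ad (foldr1 ad xs) (foldr1 ad ys)"
  and foldr1_mult_append:
  "xs \<noteq> [] \<Longrightarrow> ys \<noteq> [] \<Longrightarrow> set xs \<subseteq> A \<Longrightarrow> set ys \<subseteq> A \<Longrightarrow>
   foldr1 mu (xs @ ys) = mu (foldr1 mu xs) (foldr1 mu ys)"
  by (rule foldr1_append; simp add: add_assoc mult_assoc)+

lemma mult_foldr1_add_distrib:
  "xs \<noteq> [] \<Longrightarrow> set xs \<subseteq> A \<Longrightarrow> x \<in> A \<Longrightarrow> mu x (foldr1 ad xs) = foldr1 ad (map (mu x) xs)"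
  by (induction xs rule: induct_list012) (auto simp: distrib_left foldr1_add_in)

lemma foldr1_add_mult_foldr1_add:
  assumes "xs \<noteq> []" "ys \<noteq> []" "set xs \<subseteq> A" "set ys \<subseteq> A"
  shows "mu (foldr1 ad xs) (foldr1 ad ys) = foldr1 ad [mu x y. x \<leftarrow> xs, y \<leftarrow> ys]"
  using assms
proof (induction xs rule: induct_list012)
  case (3 x x' xs)
  have "mu (foldr1 ad (x # x' # xs)) (foldr1 ad ys)
      = ad (mu x (foldr1 ad ys)) (mu (foldr1 ad (x' # xs)) (foldr1 ad ys))"
    using 3 by (simp add: distrib_right foldr1_add_in)
  also have "\<dots> = ad (foldr1 ad (map (mu x) ys)) (foldr1 ad [mu x y. x \<leftarrow> x' # xs, y \<leftarrow> ys])"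
    using 3 by (simp add: mult_foldr1_add_distrib del: foldr1.simps(2))
  also have "\<dots> = foldr1 ad (map (mu x) ys @ [mu x y. x \<leftarrow> x' # xs, y \<leftarrow> ys])"
    using 3 by (intro foldr1_add_append[symmetric]) (auto simp: subset_iff)
  finally show ?case by simp
qed (simp_all add: mult_foldr1_add_distrib)

lemma foldr1_le_iff: "xs \<noteq> [] \<Longrightarrow> set xs \<subseteq> A \<Longrightarrow> a \<in> A \<Longrightarrow> foldr1 ad xs \<preceq> a \<longleftrightarrow> (\<forall>x\<in>set xs. x \<preceq> a)"
  by (induction xs rule: induct_list012) (auto simp: add_le_iff foldr1_add_in)

lemma eval_in: "\<forall>v. \<sigma> v \<in> A \<Longrightarrow> eval ad mu \<sigma> t \<in> A"
  by (induction t) auto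

lemma monomial_values_in:
  assumes "\<forall>v. \<sigma> v \<in> A"
  shows "set [foldr1 mu (map \<sigma> w). w \<leftarrow> monomials t] \<subseteq> A"
  using assms monomial_ne by (auto intro!: foldr1_mult_in)

lemma eval_eq_sum_monomials:
  assumes \<sigma>: "\<forall>v. \<sigma> v \<in> A"
  shows "eval ad mu \<sigma> t = foldr1 ad [foldr1 mu (map \<sigma> w). w \<leftarrow> monomials t]"
proof (induction t)
  case (Add p q)
  let ?M = "\<lambda>t. [foldr1 mu (map \<sigma> w). w \<leftarrow> monomials t]"
  have "eval ad mu \<sigma> (Add p q) = ad (foldr1 ad (?M p)) (foldr1 ad (?M q))"
    using Add by simp
  also have "\<dots> = foldr1 ad (?M p @ ?M q)"
    using monomials_ne monomial_values_in[OF \<sigma>] by (intro foldr1_add_append[symmetric]) simp_all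
  finally show ?case by simp
next
  case (Mul p q)
  let ?m = "\<lambda>w. foldr1 mu (map \<sigma> w)"
  have "eval ad mu \<sigma> (Mul p q) = mu (foldr1 ad (map ?m (monomials p))) (foldr1 ad (map ?m (monomials q)))"
    using Mul by simp
  also have "\<dots> = foldr1 ad [mu (?m u) (?m v). u \<leftarrow> monomials p, v \<leftarrow> monomials q]"
    using monomials_ne monomial_values_in[OF \<sigma>]
    by (subst foldr1_add_mult_foldr1_add) (simp_all add: map_concat comp_def)
  also have "\<dots> = foldr1 ad [?m (u @ v). u \<leftarrow> monomials p, v \<leftarrow> monomials q]"
  proof -
    have "mu (?m u) (?m v) = ?m (u @ v)" if "u \<in> set (monomials p)" "v \<in> set (monomials q)" for u v
      using \<sigma> monomial_ne[OF that(1)] monomial_ne[OF that(2)] by (simp add: foldr1_mult_append image_subset_iff)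
    then show ?thesis
      by (simp cong: map_cong)
  qed
  finally show ?case
    by (simp add: map_concat comp_def)
qed simp

lemma eval_le_iff:
  assumes "\<forall>v. \<sigma> v \<in> A" and "a \<in> A"
  shows "eval ad mu \<sigma> t \<preceq> a \<longleftrightarrow> (\<forall>w\<in>set (monomials t). foldr1 mu (map \<sigma> w) \<preceq> a)"
proof -
  have "[foldr1 mu (map \<sigma> w). w \<leftarrow> monomials t] \<noteq> []"
    using monomials_ne by simp
  then show ?thesis
    using foldr1_le_iff[OF _ monomial_values_in[OF assms(1)] assms(2)]
    by (simp add: eval_eq_sum_monomials[OF assms(1)])
qed

lemma monomial_le_eval:
  "\<forall>v. \<sigma> v \<in> A \<Longrightarrow> w \<in> set (monomials t) \<Longrightarrow> foldr1 mu (map \<sigma> w) \<preceq> eval ad mu \<sigma> t"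
  using eval_le_iff[of \<sigma> "eval ad mu \<sigma> t" t] eval_in le_refl by blast

end

lemma ai_semiring_S4: "ai_semiring UNIV add4 mul4"
proof -
  have "add4 (add4 x y) z = add4 x (add4 y z) \<and> add4 x y = add4 y x \<and> add4 x x = x \<and>
    mul4 (mul4 x y) z = mul4 x (mul4 y z) \<and>
    mul4 x (add4 y z) = add4 (mul4 x y) (mul4 x z) \<and>
    mul4 (add4 x y) z = add4 (mul4 x z) (mul4 y z)" for x y z
    by (cases x; cases y; cases z) simp_all
  then show ?thesis
    unfolding ai_semiring_def closed_alg_def by blast
qed

interpretation S4: ai_semiring_on UNIV add4 mul4
  by unfold_locales (rule ai_semiring_S4)

lemma S4_le_iff: "ai_le add4 x y \<longleftrightarrow> x = E2 \<or> y = E1 \<or> x = y"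
  by (cases x; cases y) (simp_all add: ai_le_def)

lemma foldr1_mul4:
  "2 \<le> length xs \<Longrightarrow>
   foldr1 mul4 xs = (if set xs \<subseteq> {E2} then E2 else if set xs \<subseteq> {E1, E4} then E1 else E3)"
proof (induction xs rule: induct_list012)
  case (3 x y zs)
  show ?case
  proof (cases zs)
    case Nil
    then show ?thesis by (cases x; cases y) simp_all
  next
    case (Cons z zs')
    then have "foldr1 mul4 (y # zs) =
      (if set (y # zs) \<subseteq> {E2} then E2 else if set (y # zs) \<subseteq> {E1, E4} then E1 else E3)"
      using 3 by simp
    then show ?thesis
      by (cases x) (auto split: if_splits)
  qed
qed simp_all

definition long_vars :: "'v list list \<Rightarrow> 'v set" where
  "long_vars P = (\<Union>u \<in> {u \<in> set P. 2 \<le> length u}. set u)"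

definition covered :: "'v list \<Rightarrow> 'v list list \<Rightarrow> bool" where
  "covered w P \<longleftrightarrow> (\<exists>u\<in>set P. set u \<subseteq> set w) \<and> (2 \<le> length w \<longrightarrow> set w \<subseteq> long_vars P)"

lemma long_nonempty: "2 \<le> length xs \<Longrightarrow> xs \<noteq> []"
  by auto

lemma singleton_or_long: "xs \<noteq> [] \<Longrightarrow> (\<exists>x. xs = [x]) \<or> 2 \<le> length xs"
  by (cases xs rule: remdups_adj.cases) auto

lemma S4_le_imp_monomial_subset:
  assumes le: "ai_le add4 (foldr1 mul4 (map \<tau> w)) (eval add4 mul4 \<tau> p)" and "w \<noteq> []"
    and \<tau>: "\<tau> = (\<lambda>v. if v \<in> set w then E4 else E2)"
  shows "\<exists>u\<in>set (monomials p). set u \<subseteq> set w"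
proof (rule ccontr)
  assume none: "\<not> ?thesis"
  have "ai_le add4 (foldr1 mul4 (map \<tau> u)) E3" if "u \<in> set (monomials p)" for u
  proof -
    have "\<not> set u \<subseteq> set w"
      using none that by blast
    then obtain v where "v \<in> set u" "v \<notin> set w"
      by blast
    then have "E2 \<in> set (map \<tau> u)"
      by (auto simp: \<tau>)
    then have "\<not> set (map \<tau> u) \<subseteq> {E1, E4}"
      by blast
    show ?thesis
    proof (cases "2 \<le> length u")
      case True
      then show ?thesis
        using \<open>\<not> set (map \<tau> u) \<subseteq> {E1, E4}\<close> by (simp add: foldr1_mul4 S4_le_iff)
    next
      case False
      then have "u = [v]"
        using singleton_or_long[OF monomial_ne[OF that]] \<open>v \<in> set u\<close> by auto
      then show ?thesis
        using \<open>v \<notin> set w\<close> by (simp add: \<tau> S4_le_iff)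
    qed
  qed
  then have "ai_le add4 (eval add4 mul4 \<tau> p) E3"
    by (simp add: S4.eval_le_iff)
  moreover have "set (map \<tau> w) = {E4}"
    using \<open>w \<noteq> []\<close> by (cases w) (auto simp: \<tau>)
  then have "foldr1 mul4 (map \<tau> w) \<in> {E1, E4}"
    using singleton_or_long[OF \<open>w \<noteq> []\<close>] by (auto simp: foldr1_mul4)
  ultimately show False
    using S4.le_trans[OF _ _ _ le, of E3] by (auto simp: S4_le_iff)
qed

lemma S4_le_imp_subset_long_vars:
  assumes le: "ai_le add4 (foldr1 mul4 (map \<tau> w)) (eval add4 mul4 \<tau> p)" and "2 \<le> length w"
    and \<tau>: "\<tau> = (\<lambda>v. if v \<in> long_vars (monomials p) then E2 else E4)"
  shows "set w \<subseteq> long_vars (monomials p)"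
proof (rule ccontr)
  assume "\<not> ?thesis"
  then obtain y where y: "y \<in> set w" "y \<notin> long_vars (monomials p)"
    by blast
  have "ai_le add4 (foldr1 mul4 (map \<tau> u)) E4" if u: "u \<in> set (monomials p)" for u
  proof (cases "2 \<le> length u")
    case True
    then have "set (map \<tau> u) \<subseteq> {E2}"
      using u by (auto simp: \<tau> long_vars_def)
    then show ?thesis
      using True by (simp add: foldr1_mul4 S4_le_iff)
  next
    case False
    then obtain v where "u = [v]"
      using singleton_or_long[OF monomial_ne[OF u]] by auto
    then show ?thesis
      by (simp add: \<tau> S4_le_iff)
  qed
  then have "ai_le add4 (eval add4 mul4 \<tau> p) E4"
    by (simp add: S4.eval_le_iff)
  moreover have "E4 \<in> set (map \<tau> w)"
    using y by (auto simp: \<tau>)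
  then have "foldr1 mul4 (map \<tau> w) \<in> {E1, E3}"
    using \<open>2 \<le> length w\<close> by (auto simp: foldr1_mul4)
  ultimately show False
    using S4.le_trans[OF _ _ _ le, of E4] by (auto simp: S4_le_iff)
qed

lemma covered_if_S4_le:
  assumes "\<forall>\<tau>. ai_le add4 (foldr1 mul4 (map \<tau> w)) (eval add4 mul4 \<tau> p)" and "w \<noteq> []"
  shows "covered w (monomials p)"
  unfolding covered_def
  using S4_le_imp_monomial_subset[OF _ assms(2) refl] S4_le_imp_subset_long_vars[OF _ _ refl] assms(1)
  by blast

locale ai_semiring_467 = ai_semiring_on +
  assumes mult_commute_eq: "satisfies A ad mu (Mul (Var (0::nat)) (Var 1)) (Mul (Var 1) (Var 0))"
    and square_mult_eq: "satisfies A ad mu (Mul (Mul (Var (0::nat)) (Var 0)) (Var 1)) (Mul (Var 0) (Var 1))"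
    and square_add_eq: "satisfies A ad mu (Mul (Var (0::nat)) (Var 0)) (Add (Mul (Var 0) (Var 0)) (Var 0))"
    and add_mult3_eq: "satisfies A ad mu
      (Add (Var (0::nat)) (Mul (Mul (Var 0) (Var 1)) (Var 2)))
      (Add (Add (Var 0) (Mul (Mul (Var 0) (Var 1)) (Var 2))) (Mul (Var 0) (Var 1)))"
    and add_mult_mult_eq: "satisfies A ad mu
      (Add (Mul (Var (0::nat)) (Var 1)) (Mul (Var 2) (Var 3)))
      (Add (Add (Mul (Var 0) (Var 1)) (Mul (Var 2) (Var 3)))
           (Mul (Mul (Mul (Var 0) (Var 1)) (Var 2)) (Var 3)))"
begin

lemma mult_commute: "x \<in> A \<Longrightarrow> y \<in> A \<Longrightarrow> mu x y = mu y x"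
  using satisfies_instance[OF mult_commute_eq, of "[x, y]"] by (simp add: assign_def)

lemma square_mult: "x \<in> A \<Longrightarrow> y \<in> A \<Longrightarrow> mu (mu x x) y = mu x y"
  using satisfies_instance[OF square_mult_eq, of "[x, y]"] by (simp add: assign_def)

lemma le_square: "x \<in> A \<Longrightarrow> x \<preceq> mu x x"
  using satisfies_instance[OF square_add_eq, of "[x]"] by (simp add: assign_def ai_le_def add_commute)

lemma mult_le_if_le_mult3:
  assumes "x \<in> A" "y \<in> A" "z \<in> A" "s \<in> A" "x \<preceq> s" "mu (mu x y) z \<preceq> s"
  shows "mu x y \<preceq> s"
proof -
  have "mu x y \<preceq> ad x (mu (mu x y) z)"
    using satisfies_instance[OF add_mult3_eq, of "[x, y, z]"] assms(1-3)
    by (simp add: assign_def ai_le_def add_commute)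
  moreover have "ad x (mu (mu x y) z) \<preceq> s"
    using assms by (simp add: add_le_iff)
  ultimately show ?thesis
    using assms(1-4) le_trans[of "mu x y" "ad x (mu (mu x y) z)" s] by simp
qed

lemma mult4_le_if_le:
  assumes "x \<in> A" "y \<in> A" "z \<in> A" "w \<in> A" "s \<in> A" "mu x y \<preceq> s" "mu z w \<preceq> s"
  shows "mu (mu (mu x y) z) w \<preceq> s"
proof -
  have "mu (mu (mu x y) z) w \<preceq> ad (mu x y) (mu z w)"
    using satisfies_instance[OF add_mult_mult_eq, of "[x, y, z, w]"] assms(1-4)
    by (simp add: assign_def ai_le_def add_commute)
  moreover have "ad (mu x y) (mu z w) \<preceq> s"
    using assms by (simp add: add_le_iff)
  ultimately show ?thesis
    using assms(1-5) le_trans[of "mu (mu (mu x y) z) w" "ad (mu x y) (mu z w)" s] by simp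
qed

lemma mult_left_commute: "x \<in> A \<Longrightarrow> y \<in> A \<Longrightarrow> z \<in> A \<Longrightarrow> mu x (mu y z) = mu y (mu x z)"
  by (metis mult_assoc mult_commute)

lemma mult_foldr1_eq_of_mem:
  "2 \<le> length xs \<Longrightarrow> set xs \<subseteq> A \<Longrightarrow> y \<in> set xs \<Longrightarrow> mu y (foldr1 mu xs) = foldr1 mu xs"
proof (induction xs rule: induct_list012)
  case (3 x x' xs)
  let ?P = "foldr1 mu (x' # xs)"
  have in_A: "x \<in> A" "y \<in> A" "?P \<in> A"
    using 3 foldr1_mult_in[of "x' # xs"] by auto
  consider "y = x" | "x' # xs = [y]" | "y \<in> set (x' # xs)" "2 \<le> length (x' # xs)"
    using "3.prems"(3) by (cases xs) auto
  then show ?case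
  proof cases
    case 1
    then show ?thesis
      using in_A by (simp add: mult_assoc[symmetric] square_mult)
  next
    case 2
    then show ?thesis
      using in_A by (simp add: mult_commute[of x y] mult_assoc[symmetric] square_mult)
  next
    case 3
    then have "mu y ?P = ?P"
      using "3.IH"(2) "3.prems"(2) by simp
    then show ?thesis
      using in_A by (simp add: mult_left_commute[of y x])
  qed
qed auto

lemma foldr1_mult_foldr1_eq_of_subset:
  "ys \<noteq> [] \<Longrightarrow> set ys \<subseteq> set xs \<Longrightarrow> 2 \<le> length xs \<Longrightarrow> set xs \<subseteq> A \<Longrightarrow>
   mu (foldr1 mu ys) (foldr1 mu xs) = foldr1 mu xs"
proof (induction ys rule: induct_list012)
  case (3 y y' ys)
  have in_A: "y \<in> A" "foldr1 mu (y' # ys) \<in> A" "foldr1 mu xs \<in> A"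
    using "3.prems" foldr1_mult_in[of "y' # ys"] foldr1_mult_in[OF long_nonempty, of xs] by auto
  have "mu (foldr1 mu (y # y' # ys)) (foldr1 mu xs) = mu y (mu (foldr1 mu (y' # ys)) (foldr1 mu xs))"
    using in_A by (simp add: mult_assoc)
  also have "\<dots> = foldr1 mu xs"
    using 3 mult_foldr1_eq_of_mem[of xs y] by simp
  finally show ?case .
qed (simp_all add: mult_foldr1_eq_of_mem)

lemma foldr1_mult_eq_if_set_eq:
  assumes "2 \<le> length xs" "2 \<le> length ys" "set xs = set ys" "set xs \<subseteq> A"
  shows "foldr1 mu xs = foldr1 mu ys"
proof -
  have "foldr1 mu xs = mu (foldr1 mu ys) (foldr1 mu xs)"
    using assms foldr1_mult_foldr1_eq_of_subset[OF long_nonempty, of ys xs] by auto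
  also have "\<dots> = mu (foldr1 mu xs) (foldr1 mu ys)"
    using assms by (intro mult_commute foldr1_mult_in) auto
  also have "\<dots> = foldr1 mu ys"
    using assms foldr1_mult_foldr1_eq_of_subset[OF long_nonempty, of xs ys] by auto
  finally show ?thesis .
qed

lemma foldr1_mult_append_le:
  assumes "2 \<le> length xs" "2 \<le> length ys" "set xs \<subseteq> A" "set ys \<subseteq> A" "s \<in> A"
    and "foldr1 mu xs \<preceq> s" "foldr1 mu ys \<preceq> s"
  shows "foldr1 mu (xs @ ys) \<preceq> s"
proof -
  obtain x xs' y ys' where xs: "xs = x # xs'" "xs' \<noteq> []" and ys: "ys = y # ys'" "ys' \<noteq> []"
    using assms(1,2) by (cases xs; cases ys) (simp_all add: Suc_le_eq)
  let ?X = "foldr1 mu xs'" and ?Y = "foldr1 mu ys'"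
  have in_A: "x \<in> A" "y \<in> A" "?X \<in> A" "?Y \<in> A"
    using assms(3,4) xs ys by (auto intro: foldr1_mult_in)
  have "foldr1 mu (xs @ ys) = mu (mu (mu x ?X) y) ?Y"
    using assms(3,4) xs ys in_A by (simp add: foldr1_mult_append foldr1_Cons mult_assoc)
  also have "\<dots> \<preceq> s"
    using assms(5-7) xs ys in_A by (simp add: mult4_le_if_le foldr1_Cons)
  finally show ?thesis .
qed

lemma foldr1_mult_concat_le:
  assumes "ws \<noteq> []" "\<forall>w\<in>set ws. 2 \<le> length w \<and> set w \<subseteq> A \<and> foldr1 mu w \<preceq> s" "s \<in> A"
  shows "2 \<le> length (concat ws) \<and> foldr1 mu (concat ws) \<preceq> s"
  using assms(1,2)
proof (induction ws rule: induct_list012)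
  case (3 w w' ws)
  then show ?case
    using foldr1_mult_append_le[OF _ _ _ _ assms(3), of w "concat (w' # ws)"] by auto
qed auto

lemma single_le_eval_if_covered:
  assumes \<sigma>: "\<forall>v. \<sigma> v \<in> A" and cov: "covered [x] (monomials p)"
  shows "\<sigma> x \<preceq> eval ad mu \<sigma> p"
proof -
  obtain u where u: "u \<in> set (monomials p)" "set u = {x}"
  proof -
    obtain u where "u \<in> set (monomials p)" "set u \<subseteq> {x}"
      using cov by (auto simp: covered_def)
    moreover have "set u \<noteq> {}"
      using monomial_ne[OF \<open>u \<in> set (monomials p)\<close>] by simp
    ultimately show ?thesis
      using that by (metis subset_singleton_iff)
  qed
  have u_le: "foldr1 mu (map \<sigma> u) \<preceq> eval ad mu \<sigma> p"
    using monomial_le_eval[OF \<sigma> u(1)] .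
  show ?thesis
  proof (cases "2 \<le> length u")
    case True
    moreover have "set (map \<sigma> u) = set [\<sigma> x, \<sigma> x]" "set (map \<sigma> u) \<subseteq> A"
      using u(2) \<sigma> by auto
    ultimately have "foldr1 mu (map \<sigma> u) = mu (\<sigma> x) (\<sigma> x)"
      using foldr1_mult_eq_if_set_eq[of "map \<sigma> u" "[\<sigma> x, \<sigma> x]"] by simp
    moreover have "\<sigma> x \<in> A"
      using \<sigma> by simp
    ultimately show ?thesis
      using le_trans[OF _ _ eval_in[OF \<sigma>] le_square, of "\<sigma> x"] u_le by simp
  next
    case False
    then obtain y where "u = [y]"
      using singleton_or_long[OF monomial_ne[OF u(1)]] by blast
    then show ?thesis
      using u_le u(2) by simp
  qed
qed

lemma long_le_eval_if_covered:
  assumes \<sigma>: "\<forall>v. \<sigma> v \<in> A" and long: "2 \<le> length w" and cov: "covered w (monomials p)"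
  shows "foldr1 mu (map \<sigma> w) \<preceq> eval ad mu \<sigma> p"
proof -
  let ?s = "eval ad mu \<sigma> p" and ?m = "\<lambda>u. foldr1 mu (map \<sigma> u)"
  define Ls where "Ls = filter (\<lambda>u. 2 \<le> length u) (monomials p)"
  obtain u where u: "u \<in> set (monomials p)" "set u \<subseteq> set w"
    using cov by (auto simp: covered_def)
  have w_F: "set w \<subseteq> set (concat Ls)"
    using cov long by (auto simp: covered_def long_vars_def Ls_def)
  then have "Ls \<noteq> []"
    using long by auto
  then have F: "2 \<le> length (map \<sigma> (concat Ls))" "?m (concat Ls) \<preceq> ?s"
    using foldr1_mult_concat_le[of "map (map \<sigma>) Ls" ?s] \<sigma> eval_in[OF \<sigma>] monomial_le_eval[OF \<sigma>]
    by (auto simp: Ls_def map_concat)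
  have in_A: "?m u \<in> A" "?m w \<in> A" "?m (concat Ls) \<in> A"
    using \<sigma> monomial_ne[OF u(1)] long_nonempty[OF long] long_nonempty[OF F(1)]
    by (auto intro!: foldr1_mult_in)
  have absorb: "mu (?m v) (?m w') = ?m w'" if "v \<noteq> []" "set v \<subseteq> set w'" "2 \<le> length w'" for v w'
    using \<sigma> that by (intro foldr1_mult_foldr1_eq_of_subset) auto
  have "mu (mu (?m u) (?m w)) (?m (concat Ls)) = mu (?m u) (mu (?m w) (?m (concat Ls)))"
    using in_A by (simp add: mult_assoc)
  also have "\<dots> = ?m (concat Ls)"
    using absorb[of w "concat Ls"] absorb[of u "concat Ls"] u w_F F(1) long_nonempty[OF long]
      monomial_ne[OF u(1)] by auto
  finally have "mu (mu (?m u) (?m w)) (?m (concat Ls)) = ?m (concat Ls)" .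
  then have "mu (?m u) (?m w) \<preceq> ?s"
    using mult_le_if_le_mult3[OF in_A eval_in[OF \<sigma>] monomial_le_eval[OF \<sigma> u(1)]] F(2) by simp
  then show ?thesis
    using absorb[of u w] u long monomial_ne[OF u(1)] by simp
qed

lemma monomial_le_eval_if_covered:
  assumes "\<forall>v. \<sigma> v \<in> A" "w \<noteq> []" "covered w (monomials p)"
  shows "foldr1 mu (map \<sigma> w) \<preceq> eval ad mu \<sigma> p"
  using singleton_or_long[OF assms(2)] single_le_eval_if_covered[OF assms(1)]
    long_le_eval_if_covered[OF assms(1) _ assms(3)] assms(3)
  by auto

lemma eval_le_if_S4_le:
  assumes S4_le: "\<forall>\<tau>. ai_le add4 (eval add4 mul4 \<tau> p) (eval add4 mul4 \<tau> q)"
    and \<sigma>: "\<forall>v. \<sigma> v \<in> A"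
  shows "eval ad mu \<sigma> p \<preceq> eval ad mu \<sigma> q"
  unfolding eval_le_iff[OF \<sigma> eval_in[OF \<sigma>]]
proof
  fix w
  assume w: "w \<in> set (monomials p)"
  have "ai_le add4 (foldr1 mul4 (map \<tau> w)) (eval add4 mul4 \<tau> q)" for \<tau>
    using S4.le_trans[OF _ _ _ S4.monomial_le_eval[OF _ w]] S4_le by simp
  then have "covered w (monomials q)"
    using covered_if_S4_le monomial_ne[OF w] by blast
  then show "foldr1 mu (map \<sigma> w) \<preceq> eval ad mu \<sigma> q"
    using monomial_le_eval_if_covered[OF \<sigma> monomial_ne[OF w]] by simp
qed

lemma satisfies_if_S4_satisfies:
  assumes "satisfies UNIV add4 mul4 p q"
  shows "satisfies A ad mu p q"
  unfolding satisfies_def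
proof (intro allI impI)
  fix \<sigma> :: "'b \<Rightarrow> 'a"
  assume \<sigma>: "\<forall>v. \<sigma> v \<in> A"
  have "\<forall>\<tau>. eval add4 mul4 \<tau> p = eval add4 mul4 \<tau> q"
    using assms by (simp add: satisfies_def)
  then show "eval ad mu \<sigma> p = eval ad mu \<sigma> q"
    using eval_le_if_S4_le[OF _ \<sigma>, of p q] eval_le_if_S4_le[OF _ \<sigma>, of q p]
    by (simp add: S4.le_refl le_antisym eval_in[OF \<sigma>])
qed

lemma in_V_S4: "in_V_S4 A ad mu"
  using ai_semiring satisfies_if_S4_satisfies
  unfolding in_V_S4_def ai_semiring_def by blast

end

lemma S4_satisfies_467:
  "satisfies (UNIV :: s4 set) add4 mul4 (Mul (Var (0::nat)) (Var 1)) (Mul (Var 1) (Var 0))"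
  "satisfies (UNIV :: s4 set) add4 mul4 (Mul (Mul (Var (0::nat)) (Var 0)) (Var 1)) (Mul (Var 0) (Var 1))"
  "satisfies (UNIV :: s4 set) add4 mul4 (Mul (Var (0::nat)) (Var 0)) (Add (Mul (Var 0) (Var 0)) (Var 0))"
  "satisfies (UNIV :: s4 set) add4 mul4
    (Add (Var (0::nat)) (Mul (Mul (Var 0) (Var 1)) (Var 2)))
    (Add (Add (Var 0) (Mul (Mul (Var 0) (Var 1)) (Var 2))) (Mul (Var 0) (Var 1)))"
  "satisfies (UNIV :: s4 set) add4 mul4
    (Add (Mul (Var (0::nat)) (Var 1)) (Mul (Var 2) (Var 3)))
    (Add (Add (Mul (Var 0) (Var 1)) (Mul (Var 2) (Var 3)))
         (Mul (Mul (Mul (Var 0) (Var 1)) (Var 2)) (Var 3)))"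
  unfolding satisfies_def eval.simps
  by (intro allI impI; case_tac "\<sigma> 0"; case_tac "\<sigma> 1"; case_tac "\<sigma> 2"; case_tac "\<sigma> 3"; simp)+

theorem proposition6p5:
  fixes A :: "'a set" and ad mu :: "'a \<Rightarrow> 'a \<Rightarrow> 'a"
  shows "in_V_S4 A ad mu \<longleftrightarrow>
    ai_semiring A ad mu \<and>
    satisfies A ad mu (Mul (Var (0::nat)) (Var 1)) (Mul (Var 1) (Var 0)) \<and>
    satisfies A ad mu (Mul (Mul (Var (0::nat)) (Var 0)) (Var 1)) (Mul (Var 0) (Var 1)) \<and>
    satisfies A ad mu (Mul (Var (0::nat)) (Var 0)) (Add (Mul (Var 0) (Var 0)) (Var 0)) \<and>
    satisfies A ad mu
      (Add (Var (0::nat)) (Mul (Mul (Var 0) (Var 1)) (Var 2)))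
      (Add (Add (Var 0) (Mul (Mul (Var 0) (Var 1)) (Var 2))) (Mul (Var 0) (Var 1))) \<and>
    satisfies A ad mu
      (Add (Mul (Var (0::nat)) (Var 1)) (Mul (Var 2) (Var 3)))
      (Add (Add (Mul (Var 0) (Var 1)) (Mul (Var 2) (Var 3)))
           (Mul (Mul (Mul (Var 0) (Var 1)) (Var 2)) (Var 3)))"
    (is "_ \<longleftrightarrow> _ \<and> ?identities")
proof
  assume V: "in_V_S4 A ad mu"
  then have transfer: "satisfies A ad mu p q" if "satisfies (UNIV :: s4 set) add4 mul4 p q" for p q :: "nat trm"
    using that by (simp add: in_V_S4_def)
  have "ai_semiring A ad mu"
    using V ai_semiring_S4 transfer by (auto simp: ai_semiring_iff_satisfies in_V_S4_def)
  moreover have ?identities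
    using transfer S4_satisfies_467 by simp
  ultimately show "ai_semiring A ad mu \<and> ?identities" ..
next
  assume "ai_semiring A ad mu \<and> ?identities"
  then interpret ai_semiring_467 A ad mu
    by unfold_locales simp_all
  show "in_V_S4 A ad mu"
    by (rule in_V_S4)
qed

end
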